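(* Let $G$ be a connected graph of order $n\geq 3$ and let $g:A\rightarrow B$ be any function. Then $0\leq fix(F_G)\leq 2n-3$. Both bounds are sharp, i.e. each is attained for some connected graph $G$ of order $n\ge 3$ and some function $g$.
   Context: All graphs are simple, finite, nontrivial and connected. For a graph $H$, an automorphism is a bijection $\alpha:V(H)\to V(H)$ with $\alpha(u)\alpha(v)\in E(H)$ iff $uv\in E(H)$. A set $S\subseteq V(H)$ is a fixing set of $H$ if the only automorphism of $H$ fixing every vertex of $S$ is the identity; the fixing number $fix(H)$ is the minimum cardinality of a fixing set of $H$. Functigraph: let $G_1,G_2$ be disjoint copies of a connected graph $G$, with $A=V(G_1)$, $B=V(G_2)$, and let $g:A\to B$ be a function. The functigraph $F_G$ (which depends on $g$) has vertex set $A\cup B$ and edge set $E(G_1)\cup E(G_2)\cup\{ug(u):u\in A\}$. *)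

theory Defs
  imports Main
begin

definition simple_graph :: "'a set \<Rightarrow> ('a \<Rightarrow> 'a \<Rightarrow> bool) \<Rightarrow> bool" where
  "simple_graph V E \<longleftrightarrow> finite V \<and> (\<forall>u v. E u v \<longrightarrow> u \<in> V \<and> v \<in> V)
     \<and> (\<forall>u v. E u v \<longrightarrow> E v u) \<and> (\<forall>u. \<not> E u u)"

definition connected_graph :: "'a set \<Rightarrow> ('a \<Rightarrow> 'a \<Rightarrow> bool) \<Rightarrow> bool" where
  "connected_graph V E \<longleftrightarrow> V \<noteq> {} \<and>
     (\<forall>u\<in>V. \<forall>v\<in>V. (\<lambda>x y. x \<in> V \<and> y \<in> V \<and> E x y)\<^sup>*\<^sup>* u v)"

definition automorphism :: "'a set \<Rightarrow> ('a \<Rightarrow> 'a \<Rightarrow> bool) \<Rightarrow> ('a \<Rightarrow> 'a) \<Rightarrow> bool" where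
  "automorphism V E \<alpha> \<longleftrightarrow> bij_betw \<alpha> V V \<and>
     (\<forall>u\<in>V. \<forall>v\<in>V. E (\<alpha> u) (\<alpha> v) \<longleftrightarrow> E u v)"

definition fixing_set :: "'a set \<Rightarrow> ('a \<Rightarrow> 'a \<Rightarrow> bool) \<Rightarrow> 'a set \<Rightarrow> bool" where
  "fixing_set V E S \<longleftrightarrow> S \<subseteq> V \<and>
     (\<forall>\<alpha>. automorphism V E \<alpha> \<and> (\<forall>s\<in>S. \<alpha> s = s) \<longrightarrow> (\<forall>v\<in>V. \<alpha> v = v))"

definition fixing_number :: "'a set \<Rightarrow> ('a \<Rightarrow> 'a \<Rightarrow> bool) \<Rightarrow> nat" where
  "fixing_number V E = (LEAST k. \<exists>S. fixing_set V E S \<and> card S = k)"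

text \<open>Functigraph: A = Inl ` V (copy G1), B = Inr ` V (copy G2); the function
  g : A \<rightarrow> B is represented by g :: 'a \<Rightarrow> 'a with g ` V \<subseteq> V, sending Inl u to Inr (g u).\<close>
definition functigraph_vertices :: "'a set \<Rightarrow> ('a + 'a) set" where
  "functigraph_vertices V = Inl ` V \<union> Inr ` V"

fun functigraph_edge :: "'a set \<Rightarrow> ('a \<Rightarrow> 'a \<Rightarrow> bool) \<Rightarrow> ('a \<Rightarrow> 'a) \<Rightarrow> 'a + 'a \<Rightarrow> 'a + 'a \<Rightarrow> bool" where
  "functigraph_edge V E g (Inl u) (Inl v) = E u v"
| "functigraph_edge V E g (Inr u) (Inr v) = E u v"
| "functigraph_edge V E g (Inl u) (Inr w) = (u \<in> V \<and> w = g u)"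
| "functigraph_edge V E g (Inr w) (Inl u) = (u \<in> V \<and> w = g u)"

end

theory Submission
  imports Defs "HOL-Combinatorics.Transposition"
begin

text \<open>Upper bound: some edge ab of G and some neighbour w of g a with w \<noteq> g b exist, since G is
  connected with at least three vertices. Then Inl a, Inr (g a), Inr w is an induced path in F_G
  and the vertex Inl b is adjacent to its first vertex only, so fixing the other 2n - 3 vertices
  fixes everything.

  Sharpness: for G = K_n and g constant, the vertices of the first copy, and the vertices of the
  second copy outside the image of g, are pairwise interchangeable, so a fixing set misses at most
  one of each class. For the path 0 - 1 - ... - (n - 1) with g sending n - 1 to 1 and every other
  vertex to 0, F_G is rigid: its unique leaf is fixed, and fixedness then propagates along the
  two copies of the path.\<close>

lemma automorphism_in: "automorphism V E \<alpha> \<Longrightarrow> v \<in> V \<Longrightarrow> \<alpha> v \<in> V"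
  unfolding automorphism_def bij_betw_def by auto

lemma automorphism_inj_on: "automorphism V E \<alpha> \<Longrightarrow> inj_on \<alpha> V"
  unfolding automorphism_def bij_betw_def by auto

lemma automorphism_adj_iff:
  "automorphism V E \<alpha> \<Longrightarrow> u \<in> V \<Longrightarrow> v \<in> V \<Longrightarrow> E (\<alpha> u) (\<alpha> v) \<longleftrightarrow> E u v"
  unfolding automorphism_def by auto

lemma automorphism_transpose:
  assumes "p \<in> V" "q \<in> V"
    and "\<And>x y. x \<in> V \<Longrightarrow> y \<in> V \<Longrightarrow> E (transpose p q x) (transpose p q y) \<longleftrightarrow> E x y"
  shows "automorphism V E (transpose p q)"
  using assms unfolding automorphism_def by simp

definition degree :: "'a set \<Rightarrow> ('a \<Rightarrow> 'a \<Rightarrow> bool) \<Rightarrow> 'a \<Rightarrow> nat" where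
  "degree V E v = card {u \<in> V. E v u}"

lemma automorphism_neighbours:
  assumes aut: "automorphism V E \<alpha>" and v: "v \<in> V"
  shows "{u \<in> V. E (\<alpha> v) u} = \<alpha> ` {u \<in> V. E v u}"
proof (intro equalityI subsetI)
  fix u assume u: "u \<in> {u \<in> V. E (\<alpha> v) u}"
  have "\<alpha> ` V = V" using aut unfolding automorphism_def bij_betw_def by simp
  then obtain x where "x \<in> V" "u = \<alpha> x" using u by blast
  then show "u \<in> \<alpha> ` {u \<in> V. E v u}" using u automorphism_adj_iff[OF aut v] by auto
qed (use automorphism_adj_iff[OF aut v] automorphism_in[OF aut] in auto)

lemma automorphism_degree:
  assumes "automorphism V E \<alpha>" "v \<in> V"
  shows "degree V E (\<alpha> v) = degree V E v"
proof -
  have "inj_on \<alpha> {u \<in> V. E v u}"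
    using automorphism_inj_on[OF assms(1)] by (rule inj_on_subset) auto
  then show ?thesis
    unfolding degree_def automorphism_neighbours[OF assms] by (rule card_image)
qed

lemma automorphism_fixes_last_neighbour:
  assumes aut: "automorphism V E \<alpha>" and "v \<in> V" "\<alpha> v = v" "u \<in> V" "E v u"
    and others: "\<And>x. x \<in> V \<Longrightarrow> E v x \<Longrightarrow> x \<noteq> u \<Longrightarrow> \<alpha> x = x"
  shows "\<alpha> u = u"
proof (rule ccontr)
  assume moved: "\<alpha> u \<noteq> u"
  have "\<alpha> u \<in> V" "E v (\<alpha> u)"
    using automorphism_in[OF aut] automorphism_adj_iff[OF aut] assms(2-5) by metis+
  then have "\<alpha> (\<alpha> u) = \<alpha> u" using others moved by blast
  then show False
    using moved inj_onD[OF automorphism_inj_on[OF aut]] \<open>\<alpha> u \<in> V\<close> \<open>u \<in> V\<close> by blast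
qed

lemma automorphism_fixes_chain:
  assumes aut: "automorphism V E \<alpha>"
    and in_V: "\<And>k. k \<le> m \<Longrightarrow> p k \<in> V"
    and adj: "\<And>k. k < m \<Longrightarrow> E (p (Suc k)) (p k)"
    and fixed_end: "\<alpha> (p m) = p m"
    and others: "\<And>k x. k < m \<Longrightarrow> x \<in> V \<Longrightarrow> E (p (Suc k)) x \<Longrightarrow> x \<noteq> p k \<Longrightarrow>
      \<alpha> x = x \<or> x \<in> p ` {Suc k..m}"
    and "k \<le> m"
  shows "\<alpha> (p k) = p k"
proof -
  have "\<forall>j. k \<le> j \<and> j \<le> m \<longrightarrow> \<alpha> (p j) = p j"
    using \<open>k \<le> m\<close>
  proof (induction k rule: inc_induct)
    case base
    then show ?case using fixed_end le_antisym by blast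
  next
    case (step k)
    have "\<alpha> (p k) = p k"
    proof (rule automorphism_fixes_last_neighbour[OF aut])
      show "p (Suc k) \<in> V" "p k \<in> V" "E (p (Suc k)) (p k)"
        using step.hyps in_V adj by simp_all
      show "\<alpha> (p (Suc k)) = p (Suc k)" using step.IH step.hyps by simp
      show "\<alpha> x = x" if "x \<in> V" "E (p (Suc k)) x" "x \<noteq> p k" for x
        using others[OF step.hyps(2) that] step.IH by auto
    qed
    then show ?case using step.IH by (metis Suc_leI le_neq_implies_less)
  qed
  then show ?thesis using \<open>k \<le> m\<close> by blast
qed

lemma fixing_number_le: "fixing_set V E S \<Longrightarrow> fixing_number V E \<le> card S"
  unfolding fixing_number_def by (rule Least_le) blast

lemma fixing_number_attained:
  obtains S where "fixing_set V E S" "card S = fixing_number V E"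
proof -
  have "fixing_set V E V" unfolding fixing_set_def by blast
  then show ?thesis
    using LeastI_ex[of "\<lambda>k. \<exists>S. fixing_set V E S \<and> card S = k"] that
    unfolding fixing_number_def by blast
qed

lemma card_twins_outside_fixing_set:
  assumes fixing: "fixing_set V E S" and "X \<subseteq> V"
    and twins: "\<And>p q. p \<in> X \<Longrightarrow> q \<in> X \<Longrightarrow> automorphism V E (transpose p q)"
    and "finite X"
  shows "card (X - S) \<le> 1"
proof -
  have "p = q" if "p \<in> X - S" "q \<in> X - S" for p q
  proof -
    have "\<forall>s\<in>S. transpose p q s = s" using that by (auto simp: transpose_def)
    then have "\<forall>v\<in>V. transpose p q v = v"
      using fixing twins that unfolding fixing_set_def by blast
    then have "transpose p q p = p" using that \<open>X \<subseteq> V\<close> by blast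
    then show "p = q" by simp
  qed
  then show ?thesis using \<open>finite X\<close> by (simp add: card_le_Suc0_iff_eq)
qed

text \<open>The centre y of an induced path x-y-z is the only vertex of {x, y, z} with two
  neighbours there, so an automorphism fixing everything outside {x, y, z} fixes y; a fixed
  vertex b adjacent to x but not to z then rules out exchanging x and z.\<close>
lemma fixing_set_complement_induced_path:
  assumes in_V: "x \<in> V" "y \<in> V" "z \<in> V" and distinct: "x \<noteq> y" "y \<noteq> z" "x \<noteq> z"
    and path: "E x y" "E y x" "E y z" "E z y" "\<not> E x z" "\<not> E z x"
    and b: "b \<in> V - {x, y, z}" "E b x" "\<not> E b z"
  shows "fixing_set V E (V - {x, y, z})"
  unfolding fixing_set_def
proof (intro conjI allI impI)
  fix \<alpha> assume "automorphism V E \<alpha> \<and> (\<forall>s\<in>V - {x, y, z}. \<alpha> s = s)"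
  then have aut: "automorphism V E \<alpha>" and fixed: "\<And>s. s \<in> V - {x, y, z} \<Longrightarrow> \<alpha> s = s"
    by auto
  have inj: "\<alpha> u = \<alpha> v \<longleftrightarrow> u = v" if "u \<in> V" "v \<in> V" for u v
    using inj_onD[OF automorphism_inj_on[OF aut] _ that] by auto
  have adj: "E (\<alpha> u) (\<alpha> v) \<longleftrightarrow> E u v" if "u \<in> V" "v \<in> V" for u v
    using automorphism_adj_iff[OF aut that] .
  have into_T: "\<alpha> t \<in> {x, y, z}" if t: "t \<in> {x, y, z}" for t
  proof (rule ccontr)
    have "t \<in> V" "\<alpha> t \<in> V" using t in_V automorphism_in[OF aut] by auto
    moreover assume "\<alpha> t \<notin> {x, y, z}"
    ultimately have "\<alpha> (\<alpha> t) = \<alpha> t" using fixed by blast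
    then have "\<alpha> t = t" using inj \<open>t \<in> V\<close> \<open>\<alpha> t \<in> V\<close> by blast
    then show False using \<open>\<alpha> t \<notin> {x, y, z}\<close> t by simp
  qed
  have not_end: "\<alpha> y \<noteq> e"
    if ends: "\<And>t. t \<in> {x, y, z} \<Longrightarrow> t \<noteq> e \<Longrightarrow> E e t \<Longrightarrow> t = y" for e
  proof
    assume "\<alpha> y = e"
    have "\<alpha> t = y" if "t \<in> {x, z}" for t
    proof (rule ends)
      have "t \<in> V" "t \<noteq> y" "E y t" using that in_V distinct path by auto
      then show "\<alpha> t \<in> {x, y, z}" "\<alpha> t \<noteq> e" "E e (\<alpha> t)"
        using into_T that inj[of t y] adj[of y t] in_V \<open>\<alpha> y = e\<close> by auto
    qed
    then have "\<alpha> x = \<alpha> z" by simp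
    then show False using inj in_V distinct by simp
  qed
  have "\<alpha> y = y" using into_T not_end[of x] not_end[of z] path by auto
  moreover have "\<alpha> x \<noteq> z" using adj[of b x] fixed[OF b(1)] b in_V by auto
  ultimately have "\<alpha> x = x" using into_T[of x] inj in_V distinct by auto
  with \<open>\<alpha> y = y\<close> have "\<alpha> z = z" using into_T[of z] inj in_V distinct by auto
  show "\<forall>v\<in>V. \<alpha> v = v"
    using fixed \<open>\<alpha> x = x\<close> \<open>\<alpha> y = y\<close> \<open>\<alpha> z = z\<close> by blast
qed auto

lemma connected_graph_edge_leaving:
  assumes "connected_graph V E" "c \<in> V" "c \<in> X" "v \<in> V" "v \<notin> X"
  shows "\<exists>x\<in>X. \<exists>y. E x y \<and> y \<notin> X"
proof (rule ccontr)
  assume "\<not> ?thesis"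
  then have closed: "\<And>x y. x \<in> X \<Longrightarrow> E x y \<Longrightarrow> y \<in> X" by blast
  have "(\<lambda>x y. x \<in> V \<and> y \<in> V \<and> E x y)\<^sup>*\<^sup>* c v"
    using assms unfolding connected_graph_def by blast
  then have "v \<in> X" using \<open>c \<in> X\<close> by (induction rule: rtranclp_induct) (auto intro: closed)
  then show False using \<open>v \<notin> X\<close> by contradiction
qed

lemma card_ge_3_avoid_two:
  assumes "3 \<le> card V" shows "\<exists>v\<in>V. v \<noteq> p \<and> v \<noteq> q"
proof (rule ccontr)
  assume "\<not> ?thesis"
  then have "card V \<le> card {p, q}" by (intro card_mono) auto
  also have "\<dots> \<le> 2" by (simp add: card_insert_if)
  finally show False using assms by simp
qed

lemma two_le_card: "p \<in> A \<Longrightarrow> q \<in> A \<Longrightarrow> p \<noteq> q \<Longrightarrow> finite A \<Longrightarrow> 2 \<le> card A"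
  using card_mono[of A "{p, q}"] by simp

lemma functigraph_vertices_Inl [simp]: "Inl u \<in> functigraph_vertices V \<longleftrightarrow> u \<in> V"
  and functigraph_vertices_Inr [simp]: "Inr u \<in> functigraph_vertices V \<longleftrightarrow> u \<in> V"
  unfolding functigraph_vertices_def by auto

lemma finite_functigraph_vertices: "finite V \<Longrightarrow> finite (functigraph_vertices V)"
  unfolding functigraph_vertices_def by simp

lemma card_functigraph_vertices: "finite V \<Longrightarrow> card (functigraph_vertices V) = 2 * card V"
  unfolding functigraph_vertices_def by (subst card_Un_disjoint) (auto simp: card_image)

lemma exists_edge_with_image_neighbour:
  assumes "simple_graph V E" "connected_graph V E" "3 \<le> card V" "g ` V \<subseteq> V"
  shows "\<exists>a b w. E a b \<and> E (g a) w \<and> w \<noteq> g b"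
proof -
  have E_in_V: "\<And>u v. E u v \<Longrightarrow> u \<in> V \<and> v \<in> V" and E_sym: "\<And>u v. E u v \<Longrightarrow> E v u"
    using assms(1) unfolding simple_graph_def by blast+
  obtain a where "a \<in> V" using card_ge_3_avoid_two[OF assms(3)] by blast
  moreover obtain v where "v \<in> V" "v \<noteq> a" using card_ge_3_avoid_two[OF assms(3)] by blast
  ultimately obtain b where ab: "E a b"
    using connected_graph_edge_leaving[OF assms(2), of a "{a}"] by blast
  have "g a \<in> V" "g b \<in> V" using E_in_V[OF ab] assms(4) by auto
  moreover obtain u where "u \<in> V" "u \<notin> {g a, g b}"
    using card_ge_3_avoid_two[OF assms(3)] by blast
  ultimately obtain p w where "p \<in> {g a, g b}" "E p w" "w \<notin> {g a, g b}"
    using connected_graph_edge_leaving[OF assms(2), of "g a" "{g a, g b}"] by blast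
  then show ?thesis using ab E_sym[OF ab] by blast
qed

theorem fixing_number_functigraph_le:
  assumes "simple_graph V E" "connected_graph V E" "3 \<le> card V" "g ` V \<subseteq> V"
  shows "fixing_number (functigraph_vertices V) (functigraph_edge V E g) \<le> 2 * card V - 3"
proof -
  obtain a b w where ab: "E a b" and aw: "E (g a) w" and "w \<noteq> g b"
    using exists_edge_with_image_neighbour[OF assms] by blast
  have "finite V" and E_in_V: "\<And>u v. E u v \<Longrightarrow> u \<in> V \<and> v \<in> V"
    and E_sym: "\<And>u v. E u v \<Longrightarrow> E v u" and E_irrefl: "\<And>u. \<not> E u u"
    using assms(1) unfolding simple_graph_def by blast+
  have "w \<noteq> g a" "b \<noteq> a" using E_irrefl aw ab by metis+
  let ?F = "functigraph_vertices V"
  have "fixing_set ?F (functigraph_edge V E g) (?F - {Inl a, Inr (g a), Inr w})"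
    by (rule fixing_set_complement_induced_path[where b = "Inl b"])
      (use ab aw E_in_V E_sym \<open>w \<noteq> g b\<close> \<open>w \<noteq> g a\<close> \<open>b \<noteq> a\<close> in auto)
  moreover have "card (?F - {Inl a, Inr (g a), Inr w}) = 2 * card V - 3"
    using ab aw E_in_V \<open>w \<noteq> g a\<close> \<open>finite V\<close>
    by (simp add: card_Diff_subset card_functigraph_vertices)
  ultimately show ?thesis using fixing_number_le by metis
qed

definition complete_graph_adj :: "nat \<Rightarrow> nat \<Rightarrow> nat \<Rightarrow> bool" where
  "complete_graph_adj n u v \<longleftrightarrow> u < n \<and> v < n \<and> u \<noteq> v"

lemma simple_graph_complete: "simple_graph {0..<n} (complete_graph_adj n)"
  unfolding simple_graph_def complete_graph_adj_def by auto

lemma connected_graph_complete: "0 < n \<Longrightarrow> connected_graph {0..<n} (complete_graph_adj n)"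
  unfolding connected_graph_def
proof (intro conjI ballI)
  fix u v assume "u \<in> {0..<n}" "v \<in> {0..<n}"
  then show "(\<lambda>x y. x \<in> {0..<n} \<and> y \<in> {0..<n} \<and> complete_graph_adj n x y)\<^sup>*\<^sup>* u v"
    by (cases "u = v") (auto intro: r_into_rtranclp simp: complete_graph_adj_def)
qed simp

lemma automorphism_complete_functigraph_transpose:
  assumes "p \<in> Inl ` {0..<n} \<and> q \<in> Inl ` {0..<n} \<or> p \<in> Inr ` {1..<n} \<and> q \<in> Inr ` {1..<n}"
  shows "automorphism (functigraph_vertices {0..<n})
           (functigraph_edge {0..<n} (complete_graph_adj n) (\<lambda>_. 0)) (transpose p q)"
proof (rule automorphism_transpose)
  show "p \<in> functigraph_vertices {0..<n}" "q \<in> functigraph_vertices {0..<n}"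
    using assms by auto
  fix x y
  assume "x \<in> functigraph_vertices {0..<n}" "y \<in> functigraph_vertices {0..<n}"
  then show "functigraph_edge {0..<n} (complete_graph_adj n) (\<lambda>_. 0) (transpose p q x) (transpose p q y)
      \<longleftrightarrow> functigraph_edge {0..<n} (complete_graph_adj n) (\<lambda>_. 0) x y"
    using assms by (cases x; cases y) (auto simp: transpose_def complete_graph_adj_def)
qed

lemma fixing_set_complete_functigraph_card:
  assumes "fixing_set (functigraph_vertices {0..<n})
             (functigraph_edge {0..<n} (complete_graph_adj n) (\<lambda>_. 0)) S"
  shows "2 * n - 3 \<le> card S"
proof -
  let ?X = "Inl ` {0..<n} :: (nat + nat) set" and ?Y = "Inr ` {1..<n} :: (nat + nat) set"
  have "card (?X - S) \<le> 1" "card (?Y - S) \<le> 1"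
    by (rule card_twins_outside_fixing_set[OF assms];
        auto intro: automorphism_complete_functigraph_transpose)+
  moreover have "card ?X \<le> card (?X \<inter> S) + card (?X - S)"
    "card ?Y \<le> card (?Y \<inter> S) + card (?Y - S)"
    by (metis Int_Diff_Un card_Un_le)+
  moreover have "card (?X \<inter> S) + card (?Y \<inter> S) \<le> card S"
  proof -
    have "finite S"
      using assms finite_functigraph_vertices[of "{0..<n}"] finite_subset
      unfolding fixing_set_def by blast
    then have "card ((?X \<inter> S) \<union> (?Y \<inter> S)) \<le> card S" by (intro card_mono) auto
    then show ?thesis by (subst (asm) card_Un_disjoint) auto
  qed
  moreover have "card ?X = n" "card ?Y = n - 1" by (simp_all add: card_image)
  ultimately show ?thesis by linarith
qed

theorem fixing_number_complete_functigraph: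
  assumes "3 \<le> n"
  shows "fixing_number (functigraph_vertices {0..<n})
           (functigraph_edge {0..<n} (complete_graph_adj n) (\<lambda>_. 0)) = 2 * n - 3"
proof -
  have "fixing_number (functigraph_vertices {0..<n})
          (functigraph_edge {0..<n} (complete_graph_adj n) (\<lambda>_. 0)) \<le> 2 * n - 3"
    using fixing_number_functigraph_le[OF simple_graph_complete connected_graph_complete, of n]
      assms by (simp add: image_subset_iff)
  moreover obtain S where "fixing_set (functigraph_vertices {0..<n})
      (functigraph_edge {0..<n} (complete_graph_adj n) (\<lambda>_. 0)) S"
    "card S = fixing_number (functigraph_vertices {0..<n})
      (functigraph_edge {0..<n} (complete_graph_adj n) (\<lambda>_. 0))"
    by (rule fixing_number_attained)
  ultimately show ?thesis using fixing_set_complete_functigraph_card by fastforce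
qed

definition path_graph_adj :: "nat \<Rightarrow> nat \<Rightarrow> nat \<Rightarrow> bool" where
  "path_graph_adj n i j \<longleftrightarrow> i < n \<and> j < n \<and> (j = Suc i \<or> i = Suc j)"

definition rigid_path_map :: "nat \<Rightarrow> nat \<Rightarrow> nat" where
  "rigid_path_map n i = (if i = n - 1 then 1 else 0)"

lemma simple_graph_path: "simple_graph {0..<n} (path_graph_adj n)"
  unfolding simple_graph_def path_graph_adj_def by auto

lemma connected_graph_path:
  assumes "0 < n" shows "connected_graph {0..<n} (path_graph_adj n)"
proof -
  let ?R = "\<lambda>x y. x \<in> {0..<n} \<and> y \<in> {0..<n} \<and> path_graph_adj n x y"
  have to_0: "?R\<^sup>*\<^sup>* 0 i \<and> ?R\<^sup>*\<^sup>* i 0" if "i < n" for i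
    using that
  proof (induction i)
    case (Suc i)
    then have "?R i (Suc i)" "?R (Suc i) i" by (auto simp: path_graph_adj_def)
    moreover have "?R\<^sup>*\<^sup>* 0 i" "?R\<^sup>*\<^sup>* i 0" using Suc by simp_all
    ultimately show ?case
      using rtranclp.rtrancl_into_rtrancl[of ?R 0 i "Suc i"]
        converse_rtranclp_into_rtranclp[of ?R "Suc i" i 0] by blast
  qed simp
  show ?thesis unfolding connected_graph_def
  proof (intro conjI ballI)
    fix u v assume "u \<in> {0..<n}" "v \<in> {0..<n}"
    then have "?R\<^sup>*\<^sup>* u 0" "?R\<^sup>*\<^sup>* 0 v" using to_0 by simp_all
    then show "?R\<^sup>*\<^sup>* u v" by (rule rtranclp_trans)
  qed (use assms in simp)
qed

lemma rigid_path_map_le_1: "rigid_path_map n i \<le> 1"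
  unfolding rigid_path_map_def by simp

context
  fixes n :: nat
  assumes n3: "3 \<le> n"
begin

abbreviation "PV \<equiv> functigraph_vertices {0..<n}"
abbreviation "PA \<equiv> functigraph_edge {0..<n} (path_graph_adj n) (rigid_path_map n)"

lemma finite_PV: "finite PV"
  by (simp add: finite_functigraph_vertices)

lemma degree_path_leaf: "degree PV PA (Inr (n - 1)) = 1"
proof -
  have "{u \<in> PV. PA (Inr (n - 1)) u} = {Inr (n - 2)}"
  proof (intro equalityI subsetI)
    fix u assume "u \<in> {u \<in> PV. PA (Inr (n - 1)) u}"
    then show "u \<in> {Inr (n - 2)}"
      using n3 by (cases u) (auto simp: path_graph_adj_def rigid_path_map_def split: if_splits)
  qed (use n3 in \<open>auto simp: path_graph_adj_def\<close>)
  then show ?thesis by (simp add: degree_def)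
qed

lemma two_le_degree_path:
  assumes "v \<in> PV" "v \<noteq> Inr (n - 1)"
  shows "2 \<le> degree PV PA v"
proof -
  obtain p q where "p \<in> PV" "q \<in> PV" "p \<noteq> q" "PA v p" "PA v q"
  proof (cases v)
    case (Inl i)
    have "PA v (Inr (rigid_path_map n i))" "Inr (rigid_path_map n i) \<in> PV"
      using Inl assms n3 rigid_path_map_le_1[of n i] by auto
    moreover have "PA v (Inl (Suc i)) \<and> Inl (Suc i) \<in> PV \<or> PA v (Inl (i - 1)) \<and> Inl (i - 1) \<in> PV"
      using Inl assms n3 by (cases "Suc i < n") (auto simp: path_graph_adj_def)
    ultimately show ?thesis using that by blast
  next
    case (Inr i)
    then show ?thesis
      using that[of "Inr (Suc i)" "if i = 0 then Inl 0 else Inr (i - 1)"] assms n3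
      by (cases "i = 0") (auto simp: path_graph_adj_def rigid_path_map_def)
  qed
  then show ?thesis unfolding degree_def using finite_PV by (intro two_le_card) auto
qed

lemma degree_path_Inl_last: "degree PV PA (Inl (n - 1)) \<le> 2"
proof -
  have "{u \<in> PV. PA (Inl (n - 1)) u} \<subseteq> {Inl (n - 2), Inr 1}"
  proof
    fix u assume "u \<in> {u \<in> PV. PA (Inl (n - 1)) u}"
    then show "u \<in> {Inl (n - 2), Inr 1}"
      using n3 by (cases u) (auto simp: path_graph_adj_def rigid_path_map_def)
  qed
  then have "degree PV PA (Inl (n - 1)) \<le> card {Inl (n - 2), Inr 1 :: nat + nat}"
    unfolding degree_def by (intro card_mono) auto
  then show ?thesis by (simp add: card_insert_if)
qed

lemma degree_path_Inr_0: "3 \<le> degree PV PA (Inr 0)"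
proof -
  have "{Inr 1, Inl 0, Inl 1} \<subseteq> {u \<in> PV. PA (Inr 0) u}"
    using n3 by (auto simp: path_graph_adj_def rigid_path_map_def)
  then have "card {Inr 1, Inl 0, Inl 1 :: nat + nat} \<le> degree PV PA (Inr 0)"
    unfolding degree_def using finite_PV by (intro card_mono) auto
  then show ?thesis by simp
qed

context
  fixes \<alpha>
  assumes aut: "automorphism PV PA \<alpha>"
begin

text \<open>Inr (n - 1) is the only vertex of degree 1.\<close>
lemma path_automorphism_fixes_leaf: "\<alpha> (Inr (n - 1)) = Inr (n - 1)"
  using automorphism_degree[OF aut, of "Inr (n - 1)"] two_le_degree_path[of "\<alpha> (Inr (n - 1))"]
    automorphism_in[OF aut, of "Inr (n - 1)"] degree_path_leaf n3 by fastforce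

lemma path_automorphism_fixes_Inr_pos:
  assumes "1 \<le> k" "k < n" shows "\<alpha> (Inr k) = Inr k"
proof -
  have "\<alpha> (Inr (Suc (k - 1))) = Inr (Suc (k - 1))"
  proof (rule automorphism_fixes_chain[OF aut, where p = "\<lambda>j. Inr (Suc j)" and m = "n - 2"])
    show "\<alpha> (Inr (Suc (n - 2))) = Inr (Suc (n - 2))"
      using path_automorphism_fixes_leaf n3 by (simp add: Suc_diff_Suc numeral_2_eq_2)
    fix j x assume "j < n - 2" "x \<in> PV" "PA (Inr (Suc (Suc j))) x" "x \<noteq> Inr (Suc j)"
    then show "\<alpha> x = x \<or> x \<in> (\<lambda>j. Inr (Suc j)) ` {Suc j..n - 2}"
      by (cases x) (auto simp: path_graph_adj_def rigid_path_map_def split: if_splits)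
  qed (use assms in \<open>auto simp: path_graph_adj_def\<close>)
  then show ?thesis using assms by simp
qed

lemma path_automorphism_fixes_Inr_0: "\<alpha> (Inr 0) = Inr 0"
proof -
  have "PA (Inr 1) (Inr 0)" using n3 by (simp add: path_graph_adj_def)
  then have "PA (Inr 1) (\<alpha> (Inr 0))"
    using automorphism_adj_iff[OF aut, of "Inr 1" "Inr 0"] path_automorphism_fixes_Inr_pos[of 1] n3
    by simp
  moreover have "\<alpha> (Inr 0) \<noteq> Inr 2"
    using inj_onD[OF automorphism_inj_on[OF aut], of "Inr 0" "Inr 2"]
      path_automorphism_fixes_Inr_pos[of 2] n3 by auto
  moreover have "\<alpha> (Inr 0) \<noteq> Inl (n - 1)"
    using automorphism_degree[OF aut, of "Inr 0"] degree_path_Inl_last degree_path_Inr_0 n3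
    by auto
  moreover have "\<alpha> (Inr 0) \<in> PV" using automorphism_in[OF aut] n3 by simp
  ultimately show ?thesis
    by (cases "\<alpha> (Inr 0)") (auto simp: path_graph_adj_def rigid_path_map_def split: if_splits)
qed

lemma path_automorphism_fixes_Inr: "k < n \<Longrightarrow> \<alpha> (Inr k) = Inr k"
  using path_automorphism_fixes_Inr_pos path_automorphism_fixes_Inr_0
  by (cases "k = 0") auto

lemma path_automorphism_fixes_Inl_last: "\<alpha> (Inl (n - 1)) = Inl (n - 1)"
proof (rule automorphism_fixes_last_neighbour[OF aut, where v = "Inr 1"])
  fix x assume "x \<in> PV" "PA (Inr 1) x" "x \<noteq> Inl (n - 1)"
  then show "\<alpha> x = x"
    using path_automorphism_fixes_Inr
    by (cases x) (auto simp: path_graph_adj_def rigid_path_map_def split: if_splits)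
qed (use n3 path_automorphism_fixes_Inr in \<open>auto simp: rigid_path_map_def\<close>)

lemma path_automorphism_fixes_Inl: "k < n \<Longrightarrow> \<alpha> (Inl k) = Inl k"
proof (rule automorphism_fixes_chain[OF aut, where p = Inl and m = "n - 1"])
  fix j x assume "j < n - 1" "x \<in> PV" "PA (Inl (Suc j)) x" "x \<noteq> Inl j"
  then show "\<alpha> x = x \<or> x \<in> Inl ` {Suc j..n - 1}"
    using path_automorphism_fixes_Inr by (cases x) (auto simp: path_graph_adj_def)
qed (use path_automorphism_fixes_Inl_last in \<open>auto simp: path_graph_adj_def\<close>)

end

theorem fixing_number_path_functigraph: "fixing_number PV PA = 0"
proof -
  have "fixing_set PV PA {}"
    unfolding fixing_set_def
    using path_automorphism_fixes_Inl path_automorphism_fixes_Inr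
    by (auto simp: functigraph_vertices_def)
  then show ?thesis using fixing_number_le by fastforce
qed

end

theorem proposition2p5:
  "(\<forall>(V :: 'a set) E g. simple_graph V E \<and> connected_graph V E \<and> card V \<ge> 3 \<and> g ` V \<subseteq> V \<longrightarrow>
      0 \<le> fixing_number (functigraph_vertices V) (functigraph_edge V E g) \<and>
      fixing_number (functigraph_vertices V) (functigraph_edge V E g) \<le> 2 * card V - 3)
   \<and> (\<forall>n::nat. n \<ge> 3 \<longrightarrow>
      (\<exists>(V :: nat set) E g. simple_graph V E \<and> connected_graph V E \<and> card V = n \<and> g ` V \<subseteq> V \<and>
         fixing_number (functigraph_vertices V) (functigraph_edge V E g) = 0)
    \<and> (\<exists>(V :: nat set) E g. simple_graph V E \<and> connected_graph V E \<and> card V = n \<and> g ` V \<subseteq> V \<and>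
         fixing_number (functigraph_vertices V) (functigraph_edge V E g) = 2 * n - 3))"
proof (intro conjI allI impI)
  fix V :: "'a set" and E g
  assume "simple_graph V E \<and> connected_graph V E \<and> card V \<ge> 3 \<and> g ` V \<subseteq> V"
  then show "fixing_number (functigraph_vertices V) (functigraph_edge V E g) \<le> 2 * card V - 3"
    using fixing_number_functigraph_le by blast
next
  fix n :: nat assume "3 \<le> n"
  have "0 < n" using \<open>3 \<le> n\<close> by simp
  have "rigid_path_map n ` {0..<n} \<subseteq> {0..<n}"
    using \<open>3 \<le> n\<close> by (auto simp: rigid_path_map_def)
  with \<open>3 \<le> n\<close> show "\<exists>(V :: nat set) E g. simple_graph V E \<and> connected_graph V E \<and> card V = n \<and>
      g ` V \<subseteq> V \<and> fixing_number (functigraph_vertices V) (functigraph_edge V E g) = 0"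
    by (intro exI[of _ "{0..<n}"] exI[of _ "path_graph_adj n"] exI[of _ "rigid_path_map n"])
      (simp add: simple_graph_path connected_graph_path fixing_number_path_functigraph)
  from \<open>3 \<le> n\<close> show "\<exists>(V :: nat set) E g. simple_graph V E \<and> connected_graph V E \<and> card V = n \<and>
      g ` V \<subseteq> V \<and> fixing_number (functigraph_vertices V) (functigraph_edge V E g) = 2 * n - 3"
    by (intro exI[of _ "{0..<n}"] exI[of _ "complete_graph_adj n"] exI[of _ "\<lambda>_. 0"])
      (simp add: simple_graph_complete connected_graph_complete fixing_number_complete_functigraph
        image_subset_iff)
qed simp

end
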